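(* Let $x\in D(A)$ and $t\geq 0$. (i) It holds $S(t)x\in D(A)$ with $AS(t)x=S'_+(t,x)Ax$. If $S(t)$ is linear, this results in the relation $AS(t)x=S(t)Ax$. (ii) For $t>0$, it holds $\lim_{h\downarrow 0}\frac{S(t)x-S(t-h)x}{h}=S'_-(t,x)Ax$. (iii) It holds $S'_+(t,x)Ax=S'_-(t,x)Ax$. The mapping $[0,\infty)\to X$, $s\mapsto S(s)x$ is continuously differentiable and the derivative is given by $\frac{\mathrm{d}}{\mathrm{d}s}S(s)x=AS(s)x=S'_\pm(s,x)Ax$ for $s\geq 0$. (iv) It holds $S(t)x-x=\int_0^t AS(s)x\,\mathrm{d}s=\int_0^t S'_+(s,x)Ax\,\mathrm{d}s=\int_0^t S'_-(s,x)Ax\,\mathrm{d}s$.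
   Context: Let $X$ be a Banach lattice with order continuous norm (i.e., for every net $(x_\alpha)$ with $x_\alpha\downarrow 0$ one has $\|x_\alpha\|\to 0$). An operator $T\colon X\to X$ is called bounded if $\sup_{\|x\|\le r}\|Tx\|<\infty$ for all $r>0$, and convex if $T(\lambda x+(1-\lambda)y)\le \lambda Tx+(1-\lambda)Ty$ for all $\lambda\in[0,1]$, $x,y\in X$. Let $S=(S(t))_{t\in[0,\infty)}$ be a convex $C_0$-semigroup on $X$, i.e., a family of bounded convex operators $X\to X$ with $S(0)x=x$, $S(t+s)x=S(t)S(s)x$ for all $s,t\ge 0$, $x\in X$, and $S(t)x\to x$ as $t\downarrow 0$ for all $x\in X$. Its generator $A\colon D(A)\subset X\to X$ is defined by $Ax:=\lim_{h\downarrow 0}\frac{S(h)x-x}{h}$, where $D(A)$ is the set of all $x\in X$ for which this limit exists in norm. For $t\ge 0$ and $x,y\in X$, the one-sided directional derivatives are defined by $S'_+(t,x)y:=\inf_{h>0}\frac{S(t)(x+hy)-S(t)x}{h}$ and $S'_-(t,x)y:=\sup_{h<0}\frac{S(t)(x+hy)-S(t)x}{h}$ (the infimum/supremum in the lattice $X$; these exist in $X$ and are norm limits of the corresponding difference quotients as $h\to 0$, by order continuity of the norm). *)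

theory Defs
  imports "HOL-Analysis.Analysis"
begin

definition lmod :: "'a::{ordered_real_vector, lattice} \<Rightarrow> 'a" where
  "lmod x = sup x (- x)"

definition banach_lattice :: "'a::{banach, ordered_real_vector, lattice} itself \<Rightarrow> bool" where
  "banach_lattice _ \<longleftrightarrow> (\<forall>x y::'a. lmod x \<le> lmod y \<longrightarrow> norm x \<le> norm y)"

text \<open>Order continuous norm: every decreasing net with infimum 0 converges to 0 in norm.
A decreasing net is represented by its range, a nonempty downward directed set D whose
infimum is 0; norm convergence of the (monotone) net means that the norms of elements
of D become arbitrarily small.\<close>

definition order_continuous_norm :: "'a::{banach, ordered_real_vector, lattice} itself \<Rightarrow> bool" where
  "order_continuous_norm _ \<longleftrightarrow>
     (\<forall>D::'a set. D \<noteq> {} \<and> (\<forall>a\<in>D. \<forall>b\<in>D. \<exists>c\<in>D. c \<le> a \<and> c \<le> b)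
        \<and> (\<forall>d\<in>D. 0 \<le> d) \<and> (\<forall>y. (\<forall>d\<in>D. y \<le> d) \<longrightarrow> y \<le> 0)
        \<longrightarrow> (\<forall>e>0. \<exists>d\<in>D. norm d < e))"

definition bounded_op :: "('a::real_normed_vector \<Rightarrow> 'b::real_normed_vector) \<Rightarrow> bool" where
  "bounded_op T \<longleftrightarrow> (\<forall>r>0. \<exists>M. \<forall>x. norm x \<le> r \<longrightarrow> norm (T x) \<le> M)"

definition convex_op :: "('a::real_vector \<Rightarrow> 'b::ordered_real_vector) \<Rightarrow> bool" where
  "convex_op T \<longleftrightarrow> (\<forall>c::real. \<forall>x y. 0 \<le> c \<and> c \<le> 1 \<longrightarrow>
      T (c *\<^sub>R x + (1 - c) *\<^sub>R y) \<le> c *\<^sub>R T x + (1 - c) *\<^sub>R T y)"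

definition convex_C0_semigroup ::
  "(real \<Rightarrow> 'a::{banach, ordered_real_vector, lattice} \<Rightarrow> 'a) \<Rightarrow> bool" where
  "convex_C0_semigroup S \<longleftrightarrow>
     (\<forall>t\<ge>0. bounded_op (S t) \<and> convex_op (S t)) \<and>
     (\<forall>x. S 0 x = x) \<and>
     (\<forall>s\<ge>0. \<forall>t\<ge>0. \<forall>x. S (t + s) x = S t (S s x)) \<and>
     (\<forall>x. ((\<lambda>t. S t x) \<longlongrightarrow> x) (at_right 0))"

definition gen_domain :: "(real \<Rightarrow> 'a::real_normed_vector \<Rightarrow> 'a) \<Rightarrow> 'a set" where
  "gen_domain S = {x. \<exists>y. ((\<lambda>h. (1 / h) *\<^sub>R (S h x - x)) \<longlongrightarrow> y) (at_right 0)}"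

definition generator :: "(real \<Rightarrow> 'a::real_normed_vector \<Rightarrow> 'a) \<Rightarrow> 'a \<Rightarrow> 'a" where
  "generator S x = Lim (at_right 0) (\<lambda>h. (1 / h) *\<^sub>R (S h x - x))"

definition dir_deriv_plus ::
  "(real \<Rightarrow> 'a::{real_vector, order} \<Rightarrow> 'a) \<Rightarrow> real \<Rightarrow> 'a \<Rightarrow> 'a \<Rightarrow> 'a" where
  "dir_deriv_plus S t x y = (THE z.
     (\<forall>h>0. z \<le> (1 / h) *\<^sub>R (S t (x + h *\<^sub>R y) - S t x)) \<and>
     (\<forall>w. (\<forall>h>0. w \<le> (1 / h) *\<^sub>R (S t (x + h *\<^sub>R y) - S t x)) \<longrightarrow> w \<le> z))"

definition dir_deriv_minus ::
  "(real \<Rightarrow> 'a::{real_vector, order} \<Rightarrow> 'a) \<Rightarrow> real \<Rightarrow> 'a \<Rightarrow> 'a \<Rightarrow> 'a" where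
  "dir_deriv_minus S t x y = (THE z.
     (\<forall>h<0. (1 / h) *\<^sub>R (S t (x + h *\<^sub>R y) - S t x) \<le> z) \<and>
     (\<forall>w. (\<forall>h<0. (1 / h) *\<^sub>R (S t (x + h *\<^sub>R y) - S t x) \<le> w) \<longrightarrow> z \<le> w))"

end

theory Submission
  imports Defs
begin

(* Convexity makes the difference quotients (S t (x + h y) - S t x) / h monotone in h, so in an
   order continuous Banach lattice the lattice infimum and supremum defining the directional
   derivatives are norm limits of these quotients. A convex operator that is bounded on bounded
   sets is locally Lipschitz, and Baire's theorem turns the pointwise bounds of the orbits into a
   Lipschitz bound for S s near any point, uniform in s over compact time intervals. With it,
   every error term in decompositions such as
     S h (S t x) - S t x = (S t (x + h A x) - S t x) + (S t (S h x) - S t (x + h A x))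
   is o(h): this gives (i), the analogous splitting of S t x - S (t - h) x gives (ii), and
   comparing the two one-sided quotients of S h at S t x gives (iii). Part (iv) is then the
   fundamental theorem of calculus. *)

section \<open>Banach lattices\<close>

lemma lmod_nonneg: "0 \<le> lmod (x::'a::{ordered_real_vector,lattice})"
proof -
  have "x + (- x) \<le> lmod x + lmod x"
    by (intro add_mono) (simp_all add: lmod_def)
  then have "0 \<le> (1/2::real) *\<^sub>R (lmod x + lmod x)"
    by (intro scaleR_nonneg_nonneg) auto
  then show ?thesis
    by (metis scaleR_half_double)
qed

lemma lmod_eq_self: "0 \<le> (x::'a::{ordered_real_vector,lattice}) \<Longrightarrow> lmod x = x"
  unfolding lmod_def by (metis neg_le_0_iff_le order_trans sup.absorb1)

lemma banach_latticeD:
  "banach_lattice TYPE('a) \<Longrightarrow> lmod x \<le> lmod y \<Longrightarrow> norm x \<le> norm (y::'a::{banach,ordered_real_vector,lattice})"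
  unfolding banach_lattice_def by blast

lemma norm_lmod:
  fixes x :: "'a::{banach,ordered_real_vector,lattice}"
  assumes "banach_lattice TYPE('a)"
  shows "norm (lmod x) = norm x"
  using banach_latticeD[OF assms, of "lmod x" x] banach_latticeD[OF assms, of x "lmod x"]
  by (simp add: lmod_eq_self[OF lmod_nonneg])

lemma banach_lattice_norm_mono:
  fixes a b :: "'a::{banach,ordered_real_vector,lattice}"
  assumes "banach_lattice TYPE('a)" and "0 \<le> a" "a \<le> b"
  shows "norm a \<le> norm b"
  by (rule banach_latticeD[OF assms(1)])
    (use assms(2,3) in \<open>simp add: lmod_eq_self order_trans[OF assms(2,3)]\<close>)

lemma banach_lattice_norm_between:
  fixes a u b :: "'a::{banach,ordered_real_vector,lattice}"
  assumes bl: "banach_lattice TYPE('a)" and "a \<le> u" "u \<le> b"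
  shows "norm u \<le> norm a + norm b"
proof -
  have "u \<le> lmod a + lmod b"
    using assms(3) lmod_nonneg[of a] by (metis add_increasing lmod_def order_trans sup_ge1)
  moreover have "- u \<le> lmod a + lmod b"
    using assms(2) lmod_nonneg[of b]
    by (metis add_increasing2 lmod_def neg_le_iff_le order_trans sup_ge2)
  ultimately have "lmod u \<le> lmod (lmod a + lmod b)"
    by (simp add: lmod_def[of u] lmod_eq_self add_nonneg_nonneg lmod_nonneg)
  then have "norm u \<le> norm (lmod a + lmod b)"
    by (rule banach_latticeD[OF bl])
  also have "\<dots> \<le> norm a + norm b"
    using norm_triangle_ineq[of "lmod a" "lmod b"] by (simp add: norm_lmod[OF bl])
  finally show ?thesis .
qed

lemma banach_lattice_norm_diff_between:
  fixes a u b c :: "'a::{banach,ordered_real_vector,lattice}"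
  assumes "banach_lattice TYPE('a)" and "a \<le> u" "u \<le> b"
  shows "norm (u - c) \<le> norm (a - c) + norm (b - c)"
  using banach_lattice_norm_between[OF assms(1), of "a - c" "u - c" "b - c"] assms(2,3)
  by (simp add: diff_right_mono)

lemma banach_lattice_nonneg_limit:
  fixes f :: "'b \<Rightarrow> 'a::{banach,ordered_real_vector,lattice}"
  assumes bl: "banach_lattice TYPE('a)" and lim: "(f \<longlongrightarrow> l) F" and "F \<noteq> bot"
    and nonneg: "eventually (\<lambda>i. 0 \<le> f i) F"
  shows "0 \<le> l"
proof -
  \<comment> \<open>the negative part of \<open>l\<close> is dominated by \<open>lmod (f i - l)\<close>\<close>
  have "eventually (\<lambda>i. norm (sup (- l) 0) \<le> norm (f i - l)) F"
    using nonneg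
  proof eventually_elim
    case (elim i)
    have "- l \<le> lmod (f i - l)"
      using elim by (metis diff_conv_add_uminus le_add_same_cancel2 lmod_def order_trans sup_ge1)
    then have "sup (- l) 0 \<le> lmod (f i - l)"
      by (simp add: lmod_nonneg)
    then have "norm (sup (- l) 0) \<le> norm (lmod (f i - l))"
      by (rule banach_lattice_norm_mono[OF bl sup.cobounded2])
    then show ?case
      by (simp add: norm_lmod[OF bl])
  qed
  moreover have "((\<lambda>i. norm (f i - l)) \<longlongrightarrow> 0) F"
    using tendsto_norm_zero[OF LIM_zero[OF lim]] .
  ultimately have "norm (sup (- l) 0) \<le> 0"
    by (intro tendsto_lowerbound[OF _ _ assms(3)])
  then have "sup (- l) 0 = 0"
    by simp
  then show ?thesis
    by (metis neg_le_0_iff_le sup.cobounded1)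
qed

lemma banach_lattice_le_limit:
  fixes f :: "'b \<Rightarrow> 'a::{banach,ordered_real_vector,lattice}"
  assumes "banach_lattice TYPE('a)" and "(f \<longlongrightarrow> l) F" and "F \<noteq> bot"
    and "eventually (\<lambda>i. a \<le> f i) F"
  shows "a \<le> l"
  using banach_lattice_nonneg_limit[OF assms(1) tendsto_diff[OF assms(2) tendsto_const, of a] assms(3)]
    assms(4)
  by (simp add: eventually_mono)

lemma banach_lattice_limit_le:
  fixes f :: "'b \<Rightarrow> 'a::{banach,ordered_real_vector,lattice}"
  assumes "banach_lattice TYPE('a)" and "(f \<longlongrightarrow> l) F" and "F \<noteq> bot"
    and "eventually (\<lambda>i. f i \<le> a) F"
  shows "l \<le> a"
  using banach_lattice_nonneg_limit[OF assms(1) tendsto_diff[OF tendsto_const assms(2), of a] assms(3)]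
    assms(4)
  by (simp add: eventually_mono)

lemma banach_lattice_tendsto_sandwich:
  fixes a u b :: "'b \<Rightarrow> 'a::{banach,ordered_real_vector,lattice}"
  assumes bl: "banach_lattice TYPE('a)"
    and between: "eventually (\<lambda>i. a i \<le> u i \<and> u i \<le> b i) F"
    and "(a \<longlongrightarrow> l) F" and "(b \<longlongrightarrow> l) F"
  shows "(u \<longlongrightarrow> l) F"
proof -
  have "((\<lambda>i. norm (a i - l) + norm (b i - l)) \<longlongrightarrow> 0) F"
    using assms(3,4) by (simp add: tendsto_add_zero tendsto_norm_zero LIM_zero)
  moreover have "eventually (\<lambda>i. norm (u i - l) \<le> norm (norm (a i - l) + norm (b i - l)) * 1) F"
    using between by eventually_elim (simp add: banach_lattice_norm_diff_between[OF bl])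
  ultimately show ?thesis
    by (subst LIM_zero_iff[symmetric]) (rule tendsto_0_le)
qed

lemma banach_lattice_continuous_within_sandwich:
  fixes G :: "real \<Rightarrow> 'a::{banach,ordered_real_vector,lattice}" and lo hi :: "real \<Rightarrow> real \<Rightarrow> 'a"
  assumes bl: "banach_lattice TYPE('a)"
    and between: "\<And>s k. s \<in> A \<Longrightarrow> k > 0 \<Longrightarrow> lo k s \<le> G s \<and> G s \<le> hi k s"
    and lo_cont: "\<And>k. k > 0 \<Longrightarrow> continuous (at s0 within A) (lo k)"
    and hi_cont: "\<And>k. k > 0 \<Longrightarrow> continuous (at s0 within A) (hi k)"
    and lo_lim: "((\<lambda>k. lo k s0) \<longlongrightarrow> G s0) (at_right 0)"
    and hi_lim: "((\<lambda>k. hi k s0) \<longlongrightarrow> G s0) (at_right 0)"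
  shows "continuous (at s0 within A) G"
  unfolding continuous_within
proof (rule tendstoI)
  fix e :: real assume "e > 0"
  then have e4: "e / 4 > 0"
    by simp
  have "\<forall>\<^sub>F k in at_right 0. 0 < k \<and> dist (lo k s0) (G s0) < e / 4 \<and> dist (hi k s0) (G s0) < e / 4"
    using eventually_at_right_less tendstoD[OF lo_lim e4] tendstoD[OF hi_lim e4] by eventually_elim simp
  then obtain k where k: "0 < k" "dist (lo k s0) (G s0) < e / 4" "dist (hi k s0) (G s0) < e / 4"
    using eventually_happens'[OF trivial_limit_at_right_real] by blast
  have "\<forall>\<^sub>F s in at s0 within A. s \<in> A"
    by (simp add: eventually_at_filter)
  moreover have "\<forall>\<^sub>F s in at s0 within A. dist (lo k s) (lo k s0) < e / 4"
    using lo_cont[OF k(1)] e4 unfolding continuous_within by (rule tendstoD)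
  moreover have "\<forall>\<^sub>F s in at s0 within A. dist (hi k s) (hi k s0) < e / 4"
    using hi_cont[OF k(1)] e4 unfolding continuous_within by (rule tendstoD)
  ultimately show "\<forall>\<^sub>F s in at s0 within A. dist (G s) (G s0) < e"
  proof eventually_elim
    case (elim s)
    have "norm (G s - G s0) \<le> norm (lo k s - G s0) + norm (hi k s - G s0)"
      using between[OF elim(1) k(1)] by (intro banach_lattice_norm_diff_between[OF bl]) auto
    also have "\<dots> \<le> (dist (lo k s) (lo k s0) + dist (lo k s0) (G s0)) + (dist (hi k s) (hi k s0) + dist (hi k s0) (G s0))"
      using dist_triangle[of "lo k s" "G s0" "lo k s0"] dist_triangle[of "hi k s" "G s0" "hi k s0"]
      by (simp add: dist_norm)
    also have "\<dots> < e"
      using elim k by simp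
    finally show ?case
      by (simp add: dist_norm)
  qed
qed

lemma banach_lattice_archimedean:
  fixes z c :: "'a::{banach,ordered_real_vector,lattice}"
  assumes bl: "banach_lattice TYPE('a)" and "0 \<le> z" and "\<And>n::nat. real n *\<^sub>R z \<le> c"
  shows "z = 0"
proof (rule ccontr)
  assume "z \<noteq> 0"
  obtain n :: nat where n: "norm c / norm z < real n"
    using reals_Archimedean2 by blast
  have "real n * norm z \<le> norm c"
    using banach_lattice_norm_mono[OF bl scaleR_nonneg_nonneg[OF _ assms(2)] assms(3)[of n]] by simp
  with n \<open>z \<noteq> 0\<close> show False
    by (simp add: field_simps)
qed

lemma banach_lattice_below_gaps_nonpos:
  fixes f :: "real \<Rightarrow> 'a::{banach,ordered_real_vector,lattice}"
  assumes bl: "banach_lattice TYPE('a)" and lb: "\<And>h. 0 < h \<Longrightarrow> b \<le> f h"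
    and below: "\<And>h w. 0 < h \<Longrightarrow> (\<forall>h'>0. w \<le> f h') \<Longrightarrow> y \<le> f h - w"
  shows "y \<le> 0"
proof -
  define z where "z = sup y 0"
  \<comment> \<open>adding \<open>z\<close> to a lower bound of \<open>f\<close> gives again a lower bound, so \<open>b + n z \<le> f 1\<close> for all \<open>n\<close>\<close>
  have "\<forall>h>0. b + real n *\<^sub>R z \<le> f h" for n :: nat
  proof (induction n)
    case (Suc n)
    have "z \<le> f h - (b + real n *\<^sub>R z)" if "0 < h" for h
      using below[OF that Suc] Suc that by (simp add: z_def)
    then show ?case
      by (auto simp: algebra_simps)
  qed (simp add: lb)
  then have "real n *\<^sub>R z \<le> f 1 - b" for n :: nat
    by (auto simp: algebra_simps)
  then have "z = 0"
    by (intro banach_lattice_archimedean[OF bl]) (auto simp: z_def)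
  then show ?thesis
    unfolding z_def by (metis sup.cobounded1)
qed

section \<open>Monotone limits at zero\<close>

lemma cauchy_filter_tendsto:
  fixes f :: "'b \<Rightarrow> 'a::complete_space"
  assumes "F \<noteq> bot"
    and "\<And>e. e > 0 \<Longrightarrow> \<exists>P. eventually P F \<and> (\<forall>x y. P x \<and> P y \<longrightarrow> dist (f x) (f y) < e)"
  shows "\<exists>L. (f \<longlongrightarrow> L) F"
proof -
  have "cauchy_filter (filtermap f F)"
    using assms(2) by (simp add: cauchy_filter_metric_filtermap)
  moreover have "filtermap f F \<noteq> bot"
    using assms(1) by (simp add: filtermap_bot_iff)
  ultimately obtain L where "filtermap f F \<le> nhds L"
    using cauchy_filter_complete_converges[OF _ complete_UNIV] by auto
  then show ?thesis
    by (auto simp: filterlim_def)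
qed

lemma mono_at_right_small_oscillation:
  fixes f :: "real \<Rightarrow> 'a::{banach,ordered_real_vector,lattice}"
  assumes bl: "banach_lattice TYPE('a)" and oc: "order_continuous_norm TYPE('a)"
    and mono: "\<And>h1 h2. 0 < h1 \<Longrightarrow> h1 \<le> h2 \<Longrightarrow> f h1 \<le> f h2"
    and lb: "\<And>h. 0 < h \<Longrightarrow> b \<le> f h"
    and "e > 0"
  shows "\<exists>h0>0. \<forall>h. 0 < h \<longrightarrow> h \<le> h0 \<longrightarrow> norm (f h0 - f h) < e"
proof -
  define Lb where "Lb = {w. \<forall>h>0. w \<le> f h}"
  \<comment> \<open>gaps between values of \<open>f\<close> and its lower bounds: a downward directed set with infimum 0\<close>
  define D where "D = {f h - w | h w. 0 < h \<and> w \<in> Lb}"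
  have "b \<in> Lb"
    using lb by (auto simp: Lb_def)
  have directed: "\<forall>a\<in>D. \<forall>a'\<in>D. \<exists>c\<in>D. c \<le> a \<and> c \<le> a'"
  proof (intro ballI)
    fix a a' assume "a \<in> D" "a' \<in> D"
    then obtain h w h' w' where a: "a = f h - w" "0 < h" "w \<in> Lb"
      and a': "a' = f h' - w'" "0 < h'" "w' \<in> Lb"
      unfolding D_def by blast
    have "f (min h h') - sup w w' \<in> D"
      using a a' unfolding D_def Lb_def by force
    moreover have "f (min h h') - sup w w' \<le> a" "f (min h h') - sup w w' \<le> a'"
      unfolding a(1) a'(1) by (intro diff_mono mono; simp add: a(2) a'(2))+
    ultimately show "\<exists>c\<in>D. c \<le> a \<and> c \<le> a'"
      by blast
  qed
  have inf_zero: "\<forall>y. (\<forall>d\<in>D. y \<le> d) \<longrightarrow> y \<le> 0"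
  proof (intro allI impI)
    fix y assume "\<forall>d\<in>D. y \<le> d"
    then show "y \<le> 0"
      by (intro banach_lattice_below_gaps_nonpos[OF bl lb]) (auto simp: D_def Lb_def)
  qed
  have "D \<noteq> {}"
    using \<open>b \<in> Lb\<close> unfolding D_def by (auto intro!: exI[of _ 1])
  moreover have "\<forall>d\<in>D. 0 \<le> d"
    unfolding D_def Lb_def by auto
  ultimately have "D \<noteq> {} \<and> (\<forall>a\<in>D. \<forall>a'\<in>D. \<exists>c\<in>D. c \<le> a \<and> c \<le> a') \<and> (\<forall>d\<in>D. 0 \<le> d)
      \<and> (\<forall>y. (\<forall>d\<in>D. y \<le> d) \<longrightarrow> y \<le> 0)"
    using directed inf_zero by blast
  from oc[unfolded order_continuous_norm_def, rule_format, OF this \<open>e > 0\<close>]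
  obtain d where "d \<in> D" "norm d < e"
    by blast
  then obtain h0 w where d: "d = f h0 - w" "0 < h0" "w \<in> Lb"
    unfolding D_def by blast
  have "norm (f h0 - f h) < e" if "0 < h" "h \<le> h0" for h
  proof -
    have "norm (f h0 - f h) \<le> norm (f h0 - w)"
      using mono[OF that] d(3) that(1)
      by (intro banach_lattice_norm_mono[OF bl]) (auto simp: Lb_def)
    then show ?thesis
      using d \<open>norm d < e\<close> by simp
  qed
  then show ?thesis
    using d(2) by blast
qed

lemma mono_at_right_tendsto_Inf:
  fixes f :: "real \<Rightarrow> 'a::{banach,ordered_real_vector,lattice}"
  assumes bl: "banach_lattice TYPE('a)" and oc: "order_continuous_norm TYPE('a)"
    and mono: "\<And>h1 h2. 0 < h1 \<Longrightarrow> h1 \<le> h2 \<Longrightarrow> f h1 \<le> f h2"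
    and lb: "\<And>h. 0 < h \<Longrightarrow> b \<le> f h"
  shows "\<exists>L. (f \<longlongrightarrow> L) (at_right 0) \<and> (\<forall>h>0. L \<le> f h) \<and> (\<forall>w. (\<forall>h>0. w \<le> f h) \<longrightarrow> w \<le> L)"
proof -
  have "\<exists>P. eventually P (at_right 0) \<and> (\<forall>h h'. P h \<and> P h' \<longrightarrow> dist (f h) (f h') < e)"
    if "e > 0" for e
  proof -
    obtain h0 where h0: "h0 > 0" "\<And>h. 0 < h \<Longrightarrow> h \<le> h0 \<Longrightarrow> norm (f h0 - f h) < e / 2"
      using mono_at_right_small_oscillation[of f b "e / 2", OF bl oc mono lb] \<open>e > 0\<close> by auto
    have close: "dist (f h) (f h') < e" if "0 < h" "h < h0" "0 < h'" "h' < h0" for h h'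
    proof -
      have "dist (f h) (f h') \<le> norm (f h0 - f h) + norm (f h0 - f h')"
        using norm_triangle_ineq4[of "f h0 - f h'" "f h0 - f h"] by (simp add: dist_norm add.commute)
      then show ?thesis
        using h0(2)[of h] h0(2)[of h'] that by simp
    qed
    show ?thesis
    proof (intro exI conjI)
      show "eventually (\<lambda>h. 0 < h \<and> h < h0) (at_right 0)"
        using h0(1) by (rule eventually_at_rightI[rotated]) simp
      show "\<forall>h h'. (0 < h \<and> h < h0) \<and> (0 < h' \<and> h' < h0) \<longrightarrow> dist (f h) (f h') < e"
        using close by blast
    qed
  qed
  then obtain L where L: "(f \<longlongrightarrow> L) (at_right 0)"
    using cauchy_filter_tendsto[of "at_right (0::real)" f] by auto
  have "L \<le> f h" if "h > 0" for h
  proof (rule banach_lattice_limit_le[OF bl L])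
    show "eventually (\<lambda>h'. f h' \<le> f h) (at_right 0)"
      using that by (rule eventually_at_rightI[rotated]) (simp add: mono)
  qed simp
  moreover have "w \<le> L" if "\<forall>h>0. w \<le> f h" for w
  proof (rule banach_lattice_le_limit[OF bl L])
    show "eventually (\<lambda>h. w \<le> f h) (at_right 0)"
      using eventually_at_right_less by (rule eventually_mono) (use that in simp)
  qed simp
  ultimately show ?thesis
    using L by blast
qed

section \<open>Convex operators\<close>

definition diff_quot :: "('a::real_vector \<Rightarrow> 'b::real_vector) \<Rightarrow> 'a \<Rightarrow> 'a \<Rightarrow> real \<Rightarrow> 'b" where
  "diff_quot T x y h = (1 / h) *\<^sub>R (T (x + h *\<^sub>R y) - T x)"

lemma convex_opD:
  "convex_op T \<Longrightarrow> 0 \<le> c \<Longrightarrow> c \<le> 1 \<Longrightarrow> T (c *\<^sub>R a + (1 - c) *\<^sub>R b) \<le> c *\<^sub>R T a + (1 - c) *\<^sub>R T b"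
  unfolding convex_op_def by blast

lemma diff_quot_uminus: "diff_quot T x y h = - diff_quot T x (- y) (- h)"
  by (simp add: diff_quot_def)

lemma convex_diff_quot_mono_pos:
  fixes T :: "'a::real_vector \<Rightarrow> 'b::ordered_real_vector"
  assumes cv: "convex_op T" and "0 < h1" "h1 \<le> h2"
  shows "diff_quot T x y h1 \<le> diff_quot T x y h2"
proof -
  define c where "c = h1 / h2"
  have c: "0 \<le> c" "c \<le> 1" "c * h2 = h1"
    using assms(2,3) by (auto simp: c_def)
  have "x + h1 *\<^sub>R y = c *\<^sub>R (x + h2 *\<^sub>R y) + (1 - c) *\<^sub>R x"
    by (simp add: algebra_simps flip: c(3))
  then have "T (x + h1 *\<^sub>R y) \<le> c *\<^sub>R T (x + h2 *\<^sub>R y) + (1 - c) *\<^sub>R T x"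
    using convex_opD[OF cv c(1,2)] by simp
  then have "T (x + h1 *\<^sub>R y) - T x \<le> c *\<^sub>R (T (x + h2 *\<^sub>R y) - T x)"
    by (simp add: algebra_simps)
  then have "(1 / h1) *\<^sub>R (T (x + h1 *\<^sub>R y) - T x) \<le> (1 / h1) *\<^sub>R (c *\<^sub>R (T (x + h2 *\<^sub>R y) - T x))"
    by (rule scaleR_left_mono) (use assms(2) in simp)
  then show ?thesis
    using assms(2) by (simp add: diff_quot_def c_def)
qed

lemma convex_diff_quot_neg_le_pos:
  fixes T :: "'a::real_vector \<Rightarrow> 'b::ordered_real_vector"
  assumes cv: "convex_op T" and "h < 0" "0 < k"
  shows "diff_quot T x y h \<le> diff_quot T x y k"
proof -
  define c where "c = k / (k - h)"
  have c: "0 \<le> c" "c \<le> 1"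
    using assms(2,3) by (auto simp: c_def)
  have "c * h + (1 - c) * k = 0"
    using assms(2,3) by (simp add: c_def field_simps)
  moreover have "c *\<^sub>R (x + h *\<^sub>R y) + (1 - c) *\<^sub>R (x + k *\<^sub>R y) = x + (c * h + (1 - c) * k) *\<^sub>R y"
    by (simp add: algebra_simps)
  ultimately have "x = c *\<^sub>R (x + h *\<^sub>R y) + (1 - c) *\<^sub>R (x + k *\<^sub>R y)"
    by simp
  then have "T x \<le> c *\<^sub>R T (x + h *\<^sub>R y) + (1 - c) *\<^sub>R T (x + k *\<^sub>R y)"
    using convex_opD[OF cv c] by metis
  then have comb: "0 \<le> c *\<^sub>R (T (x + h *\<^sub>R y) - T x) + (1 - c) *\<^sub>R (T (x + k *\<^sub>R y) - T x)"
    by (simp add: algebra_simps)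
  have "0 \<le> (k - h) / (- h * k)"
    using assms(2,3) by (intro divide_nonneg_nonneg) (auto simp: mult_nonpos_nonneg)
  from scaleR_nonneg_nonneg[OF this comb]
  have "0 \<le> ((k - h) / (- h * k)) *\<^sub>R (c *\<^sub>R (T (x + h *\<^sub>R y) - T x) + (1 - c) *\<^sub>R (T (x + k *\<^sub>R y) - T x))" .
  also have "\<dots> = diff_quot T x y k - diff_quot T x y h"
  proof -
    have "(k - h) / (- h * k) * c = - (1 / h)" "(k - h) / (- h * k) * (1 - c) = 1 / k"
      using assms(2,3) by (simp_all add: c_def field_simps)
    then show ?thesis
      unfolding diff_quot_def scaleR_add_right scaleR_scaleR by simp
  qed
  finally show ?thesis
    by simp
qed

lemma convex_diff_quot_mono:
  fixes T :: "'a::real_vector \<Rightarrow> 'b::ordered_real_vector"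
  assumes cv: "convex_op T" and "h1 \<le> h2" "h1 \<noteq> 0" "h2 \<noteq> 0"
  shows "diff_quot T x y h1 \<le> diff_quot T x y h2"
proof (cases "0 < h1")
  case True
  then show ?thesis
    by (rule convex_diff_quot_mono_pos[OF cv _ assms(2)])
next
  case False
  show ?thesis
  proof (cases "0 < h2")
    case True
    with False assms(3) show ?thesis
      using convex_diff_quot_neg_le_pos[OF cv] by simp
  next
    case False
    then have "diff_quot T x (- y) (- h2) \<le> diff_quot T x (- y) (- h1)"
      using assms(2,4) by (intro convex_diff_quot_mono_pos[OF cv]) auto
    then show ?thesis
      by (simp add: diff_quot_uminus[of T x y h1] diff_quot_uminus[of T x y h2])
  qed
qed

lemma dir_deriv_plus_eqI:
  assumes "\<And>h. h > 0 \<Longrightarrow> L \<le> diff_quot (S t) x y h"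
    and "\<And>w. (\<And>h. h > 0 \<Longrightarrow> w \<le> diff_quot (S t) x y h) \<Longrightarrow> w \<le> L"
  shows "dir_deriv_plus S t x y = L"
  unfolding dir_deriv_plus_def
proof (rule the_equality)
  fix z
  assume "(\<forall>h>0. z \<le> (1 / h) *\<^sub>R (S t (x + h *\<^sub>R y) - S t x)) \<and>
    (\<forall>w. (\<forall>h>0. w \<le> (1 / h) *\<^sub>R (S t (x + h *\<^sub>R y) - S t x)) \<longrightarrow> w \<le> z)"
  then have "z \<le> L" "L \<le> z"
    using assms by (simp_all add: diff_quot_def)
  then show "z = L"
    by (rule antisym)
qed (use assms in \<open>simp add: diff_quot_def\<close>)

lemma dir_deriv_minus_eqI:
  assumes "\<And>h. h < 0 \<Longrightarrow> diff_quot (S t) x y h \<le> L"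
    and "\<And>w. (\<And>h. h < 0 \<Longrightarrow> diff_quot (S t) x y h \<le> w) \<Longrightarrow> L \<le> w"
  shows "dir_deriv_minus S t x y = L"
  unfolding dir_deriv_minus_def
proof (rule the_equality)
  fix z
  assume "(\<forall>h<0. (1 / h) *\<^sub>R (S t (x + h *\<^sub>R y) - S t x) \<le> z) \<and>
    (\<forall>w. (\<forall>h<0. (1 / h) *\<^sub>R (S t (x + h *\<^sub>R y) - S t x) \<le> w) \<longrightarrow> z \<le> w)"
  then have "z \<le> L" "L \<le> z"
    using assms by (simp_all add: diff_quot_def)
  then show "z = L"
    by (rule antisym)
qed (use assms in \<open>simp add: diff_quot_def\<close>)

lemma convex_dir_deriv_plus:
  fixes S :: "real \<Rightarrow> 'a::{banach,ordered_real_vector,lattice} \<Rightarrow> 'a"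
  assumes bl: "banach_lattice TYPE('a)" and oc: "order_continuous_norm TYPE('a)"
    and cv: "convex_op (S t)"
  shows "(diff_quot (S t) x y \<longlongrightarrow> dir_deriv_plus S t x y) (at_right 0)"
    and "h > 0 \<Longrightarrow> dir_deriv_plus S t x y \<le> diff_quot (S t) x y h"
proof -
  have mono: "diff_quot (S t) x y h1 \<le> diff_quot (S t) x y h2" if "0 < h1" "h1 \<le> h2" for h1 h2
    using that by (intro convex_diff_quot_mono[OF cv]) auto
  have lb: "diff_quot (S t) x y (- 1) \<le> diff_quot (S t) x y h" if "0 < h" for h
    using that by (intro convex_diff_quot_mono[OF cv]) auto
  obtain L where L: "(diff_quot (S t) x y \<longlongrightarrow> L) (at_right 0)"
    "\<forall>h>0. L \<le> diff_quot (S t) x y h"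
    "\<forall>w. (\<forall>h>0. w \<le> diff_quot (S t) x y h) \<longrightarrow> w \<le> L"
    using mono_at_right_tendsto_Inf[of "diff_quot (S t) x y" "diff_quot (S t) x y (- 1)", OF bl oc mono lb] by blast
  have Dp: "dir_deriv_plus S t x y = L"
  proof (rule dir_deriv_plus_eqI[where S = S and t = t])
    show "L \<le> diff_quot (S t) x y h" if "h > 0" for h
      using L(2) that by simp
    show "w \<le> L" if "\<And>h. h > 0 \<Longrightarrow> w \<le> diff_quot (S t) x y h" for w
      by (rule L(3)[rule_format]) (intro allI impI that)
  qed
  show "(diff_quot (S t) x y \<longlongrightarrow> dir_deriv_plus S t x y) (at_right 0)"
    unfolding Dp by (rule L(1))
  show "h > 0 \<Longrightarrow> dir_deriv_plus S t x y \<le> diff_quot (S t) x y h"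
    unfolding Dp using L(2) by simp
qed

lemma convex_dir_deriv_minus_eq:
  fixes S :: "real \<Rightarrow> 'a::{banach,ordered_real_vector,lattice} \<Rightarrow> 'a"
  assumes bl: "banach_lattice TYPE('a)" and oc: "order_continuous_norm TYPE('a)"
    and cv: "convex_op (S t)"
  shows "dir_deriv_minus S t x y = - dir_deriv_plus S t x (- y)"
proof (rule dir_deriv_minus_eqI[where S = S and t = t])
  show "diff_quot (S t) x y h \<le> - dir_deriv_plus S t x (- y)" if "h < 0" for h
  proof -
    have "dir_deriv_plus S t x (- y) \<le> diff_quot (S t) x (- y) (- h)"
      using that by (intro convex_dir_deriv_plus(2)[where S = S and t = t, OF bl oc cv]) simp
    then show ?thesis
      by (subst diff_quot_uminus) (rule le_imp_neg_le)
  qed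
  show "- dir_deriv_plus S t x (- y) \<le> w" if w_ub: "\<And>h. h < 0 \<Longrightarrow> diff_quot (S t) x y h \<le> w" for w
  proof -
    have "- w \<le> diff_quot (S t) x (- y) h" if "h > 0" for h
    proof -
      have "diff_quot (S t) x y (- h) \<le> w"
        using w_ub that by simp
      then have "- diff_quot (S t) x (- y) h \<le> w"
        by (simp add: diff_quot_uminus[of "S t" x y "- h"])
      then show ?thesis
        by (rule minus_le_iff[THEN iffD1])
    qed
    then have "eventually (\<lambda>h. - w \<le> diff_quot (S t) x (- y) h) (at_right 0)"
      using eventually_at_right_less by (rule eventually_mono[rotated])
    then have "- w \<le> dir_deriv_plus S t x (- y)"
      by (intro banach_lattice_le_limit[OF bl convex_dir_deriv_plus(1)[where S = S and t = t, OF bl oc cv]]) simp_all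
    then show ?thesis
      by (rule minus_le_iff[THEN iffD1])
  qed
qed

lemma convex_dir_deriv_minus:
  fixes S :: "real \<Rightarrow> 'a::{banach,ordered_real_vector,lattice} \<Rightarrow> 'a"
  assumes bl: "banach_lattice TYPE('a)" and oc: "order_continuous_norm TYPE('a)"
    and cv: "convex_op (S t)"
  shows "((\<lambda>h. diff_quot (S t) x y (- h)) \<longlongrightarrow> dir_deriv_minus S t x y) (at_right 0)"
    and "h > 0 \<Longrightarrow> diff_quot (S t) x y (- h) \<le> dir_deriv_minus S t x y"
proof -
  have dq: "diff_quot (S t) x y (- h) = - diff_quot (S t) x (- y) h" for h
    by (simp add: diff_quot_uminus[of "S t" x y "- h"])
  have Dm: "dir_deriv_minus S t x y = - dir_deriv_plus S t x (- y)"
    by (rule convex_dir_deriv_minus_eq[where S = S and t = t, OF bl oc cv])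
  show "((\<lambda>h. diff_quot (S t) x y (- h)) \<longlongrightarrow> dir_deriv_minus S t x y) (at_right 0)"
    unfolding dq Dm by (intro tendsto_minus convex_dir_deriv_plus(1)[where S = S and t = t, OF bl oc cv])
  show "h > 0 \<Longrightarrow> diff_quot (S t) x y (- h) \<le> dir_deriv_minus S t x y"
    unfolding dq Dm neg_le_iff_le by (rule convex_dir_deriv_plus(2)[where S = S and t = t, OF bl oc cv])
qed

lemma convex_op_diff_le:
  fixes T :: "'a::real_vector \<Rightarrow> 'b::ordered_real_vector"
  assumes cv: "convex_op T" and "d > 0" "r > 0"
  shows "T v - T u \<le> (d / (r + d)) *\<^sub>R (T (v + (r / d) *\<^sub>R (v - u)) - T u)"
proof -
  define c where "c = r / (r + d)"
  have c: "0 \<le> c" "c \<le> 1" "1 - c = d / (r + d)" "(1 - c) * (r / d) = c"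
    using assms(2,3) by (auto simp: c_def field_simps)
  have "(1 - c) *\<^sub>R (v + (r / d) *\<^sub>R (v - u)) = (1 - c) *\<^sub>R v + c *\<^sub>R (v - u)"
    by (simp add: scaleR_add_right c(4)[unfolded times_divide_eq_right])
  then have "v = c *\<^sub>R u + (1 - c) *\<^sub>R (v + (r / d) *\<^sub>R (v - u))"
    by (simp add: algebra_simps)
  then have "T v \<le> c *\<^sub>R T u + (1 - c) *\<^sub>R T (v + (r / d) *\<^sub>R (v - u))"
    using convex_opD[OF cv c(1,2)] by metis
  then have "T v - T u \<le> (1 - c) *\<^sub>R (T (v + (r / d) *\<^sub>R (v - u)) - T u)"
    by (simp add: algebra_simps)
  then show ?thesis
    unfolding c(3) .
qed

lemma convex_op_norm_diff_le:
  fixes T :: "'a::real_normed_vector \<Rightarrow> 'b::{banach,ordered_real_vector,lattice}"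
  assumes bl: "banach_lattice TYPE('b)" and cv: "convex_op T"
    and "d = norm (u - v)" and "d > 0" "r > 0"
  shows "norm (T v - T u) \<le> (d / (r + d)) *
    (norm (T (u + (r / d) *\<^sub>R (u - v)) - T v) + norm (T (v + (r / d) *\<^sub>R (v - u)) - T u))"
proof -
  have up: "T v - T u \<le> (d / (r + d)) *\<^sub>R (T (v + (r / d) *\<^sub>R (v - u)) - T u)"
    by (rule convex_op_diff_le[OF cv \<open>d > 0\<close> \<open>r > 0\<close>])
  have "T u - T v \<le> (d / (r + d)) *\<^sub>R (T (u + (r / d) *\<^sub>R (u - v)) - T v)"
    by (rule convex_op_diff_le[OF cv \<open>d > 0\<close> \<open>r > 0\<close>])
  then have lo: "- ((d / (r + d)) *\<^sub>R (T (u + (r / d) *\<^sub>R (u - v)) - T v)) \<le> T v - T u"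
    by (simp add: minus_le_iff)
  show ?thesis
    using banach_lattice_norm_between[OF bl lo up] \<open>d > 0\<close> \<open>r > 0\<close> by (simp add: distrib_left)
qed

lemma convex_op_lipschitz_on_cball:
  fixes T :: "'a::real_normed_vector \<Rightarrow> 'b::{banach,ordered_real_vector,lattice}"
  assumes bl: "banach_lattice TYPE('b)" and cv: "convex_op T" and "r > 0"
    and bound: "\<And>z. z \<in> cball p (2 * r) \<Longrightarrow> norm (T z) \<le> M"
  shows "(4 * M / r)-lipschitz_on (cball p r) T"
proof (rule lipschitz_onI)
  have "0 \<le> M"
    by (rule order_trans[OF norm_ge_zero bound[of p]]) (use \<open>r > 0\<close> in simp)
  then show "0 \<le> 4 * M / r"
    using \<open>r > 0\<close> by simp
  fix u v assume u: "u \<in> cball p r" and v: "v \<in> cball p r"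
  show "dist (T u) (T v) \<le> 4 * M / r * dist u v"
  proof (cases "u = v")
    case False
    define d where "d = norm (u - v)"
    have "d > 0"
      using False by (simp add: d_def)
    \<comment> \<open>extend the segment between \<open>u\<close> and \<open>v\<close> by length \<open>r\<close> beyond either end\<close>
    define w where "w = v + (r / d) *\<^sub>R (v - u)"
    define w' where "w' = u + (r / d) *\<^sub>R (u - v)"
    have "norm (v - u) = d"
      by (simp add: d_def norm_minus_commute)
    then have "dist v w = r" "dist u w' = r"
      using \<open>d > 0\<close> \<open>r > 0\<close> by (simp_all add: w_def w'_def dist_norm d_def)
    then have "w \<in> cball p (2 * r)" "w' \<in> cball p (2 * r)"
      using u v dist_triangle[of p w v] dist_triangle[of p w' u] by auto
    then have bounds: "norm (T w) \<le> M" "norm (T w') \<le> M" "norm (T u) \<le> M" "norm (T v) \<le> M"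
      using u v \<open>r > 0\<close> by (auto intro!: bound)
    have "norm (T v - T u) \<le> (d / (r + d)) * (norm (T w' - T v) + norm (T w - T u))"
      unfolding w_def w'_def d_def using \<open>d > 0\<close> \<open>r > 0\<close>
      by (intro convex_op_norm_diff_le[OF bl cv]) (simp_all add: d_def)
    also have "\<dots> \<le> (d / (r + d)) * (4 * M)"
      using bounds norm_triangle_ineq4[of "T w'" "T v"] norm_triangle_ineq4[of "T w" "T u"]
        \<open>d > 0\<close> \<open>r > 0\<close>
      by (intro mult_left_mono) auto
    also have "\<dots> \<le> (d / r) * (4 * M)"
      using \<open>d > 0\<close> \<open>r > 0\<close> \<open>0 \<le> M\<close> by (intro mult_right_mono divide_left_mono) auto
    finally show ?thesis
      by (simp add: dist_norm d_def norm_minus_commute mult.commute)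
  qed simp
qed

lemma bounded_op_cball:
  assumes "bounded_op T"
  obtains M where "\<And>z. z \<in> cball p r \<Longrightarrow> norm (T z) \<le> M"
proof -
  have "norm p + \<bar>r\<bar> + 1 > 0"
    by (simp add: add_nonneg_pos)
  then obtain M where "\<And>z. norm z \<le> norm p + \<bar>r\<bar> + 1 \<Longrightarrow> norm (T z) \<le> M"
    using assms unfolding bounded_op_def by blast
  moreover have "norm z \<le> norm p + \<bar>r\<bar> + 1" if "z \<in> cball p r" for z
    using that norm_triangle_ineq2[of z p] by (auto simp: dist_norm norm_minus_commute)
  ultimately show ?thesis
    using that by blast
qed

lemma convex_bounded_op_continuous:
  fixes T :: "'a::real_normed_vector \<Rightarrow> 'b::{banach,ordered_real_vector,lattice}"
  assumes bl: "banach_lattice TYPE('b)" and cv: "convex_op T" and bd: "bounded_op T"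
  shows "continuous_on UNIV T"
proof (rule continuous_at_imp_continuous_on, intro ballI)
  fix p :: 'a
  obtain M where "\<And>z. z \<in> cball p (2 * 1) \<Longrightarrow> norm (T z) \<le> M"
    using bounded_op_cball[OF bd] by blast
  then have "(4 * M / 1)-lipschitz_on (cball p 1) T"
    by (rule convex_op_lipschitz_on_cball[OF bl cv zero_less_one])
  then have "continuous_on (ball p 1) T"
    by (rule lipschitz_on_continuous_on[OF lipschitz_on_subset[OF _ ball_subset_cball]])
  then show "isCont T p"
    by (simp add: continuous_on_eq_continuous_at)
qed

lemma Baire_uniform_bound_on_ball:
  fixes T :: "'i \<Rightarrow> 'a::banach \<Rightarrow> 'b::real_normed_vector"
  assumes cont: "\<And>i. i \<in> I \<Longrightarrow> continuous_on UNIV (T i)"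
    and pointwise: "\<And>z. \<exists>C. \<forall>i\<in>I. norm (T i z) \<le> C"
  shows "\<exists>c r M. r > 0 \<and> (\<forall>i\<in>I. \<forall>z\<in>ball c r. norm (T i z) \<le> M)"
proof -
  define F where "F m = (\<Inter>i\<in>I. {z. norm (T i z) \<le> real m})" for m :: nat
  have closed_F: "closed (F m)" for m
    unfolding F_def
    by (intro closed_INT ballI closed_Collect_le continuous_on_norm cont continuous_on_const)
  have "\<Union>(range F) = UNIV"
  proof (intro set_eqI iffI)
    fix z :: 'a
    obtain C where C: "\<forall>i\<in>I. norm (T i z) \<le> C"
      using pointwise by blast
    have "C \<le> real (nat \<lceil>C\<rceil>)"
      by linarith
    then have "z \<in> F (nat \<lceil>C\<rceil>)"
      using C unfolding F_def by (auto intro: order_trans)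
    then show "z \<in> \<Union>(range F)"
      by blast
  qed auto
  moreover have "euclidean interior_of \<Union>(range F) = {}" if "\<And>m. interior (F m) = {}"
  proof (rule Baire_category_alt)
    show "completely_metrizable_space (euclidean :: 'a topology) \<or>
        locally_compact_space (euclidean :: 'a topology) \<and> regular_space (euclidean :: 'a topology)"
      using completely_metrizable_space_euclidean by blast
    show "closedin euclidean S \<and> euclidean interior_of S = {}" if "S \<in> range F" for S
      using closed_F \<open>\<And>m. interior (F m) = {}\<close> that by (auto simp flip: closed_closedin)
  qed simp
  ultimately obtain m where "interior (F m) \<noteq> {}"
    by auto
  then obtain c r where "r > 0" "ball c r \<subseteq> F m"
    by (meson ex_in_conv interior_subset open_contains_ball open_interior subset_trans)
  then show ?thesis
    unfolding F_def by blast
qed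

lemma convex_half:
  "convex_op T \<Longrightarrow> T ((1/2) *\<^sub>R a + (1/2) *\<^sub>R b) \<le> (1/2) *\<^sub>R T a + (1/2) *\<^sub>R T b"
  using convex_opD[of T "1/2" a b] by simp

lemma convex_op_bound_transfer:
  fixes T :: "'a::real_normed_vector \<Rightarrow> 'b::{banach,ordered_real_vector,lattice}"
  assumes bl: "banach_lattice TYPE('b)" and cv: "convex_op T"
    and on_ball: "\<And>z. z \<in> ball c r \<Longrightarrow> norm (T z) \<le> m"
    and "norm (T p) \<le> Cp" and "norm (T (2 *\<^sub>R p - c)) \<le> C2"
    and z: "z \<in> ball p (r / 2)"
  shows "norm (T z) \<le> 2 * Cp + C2 + m"
proof -
  \<comment> \<open>\<open>q\<close> is the midpoint of \<open>2 p - c\<close> and a point of \<open>ball c r\<close>\<close>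
  define U where "U q = (1/2) *\<^sub>R T (2 *\<^sub>R p - c) + (1/2) *\<^sub>R T (c + 2 *\<^sub>R (q - p))" for q
  have upper: "T q \<le> U q" for q
  proof -
    have "q = (1/2) *\<^sub>R (2 *\<^sub>R p - c) + (1/2) *\<^sub>R (c + 2 *\<^sub>R (q - p))"
      by (simp add: algebra_simps)
    then show ?thesis
      unfolding U_def by (metis convex_half[OF cv])
  qed
  have U_bound: "norm (U q) \<le> C2 / 2 + m / 2" if "q \<in> ball p (r / 2)" for q
  proof -
    have "c + 2 *\<^sub>R (q - p) \<in> ball c r"
      using that by (simp add: dist_norm norm_minus_commute)
    then have "norm (T (c + 2 *\<^sub>R (q - p))) \<le> m"
      by (rule on_ball)
    then show ?thesis
      unfolding U_def using assms(5) norm_triangle_ineq[of "(1/2) *\<^sub>R T (2 *\<^sub>R p - c)" "(1/2) *\<^sub>R T (c + 2 *\<^sub>R (q - p))"]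
      by simp
  qed
  \<comment> \<open>\<open>p\<close> is the midpoint of \<open>z\<close> and its reflection \<open>z'\<close>\<close>
  define z' where "z' = 2 *\<^sub>R p - z"
  have z': "z' \<in> ball p (r / 2)"
    using z by (simp add: z'_def dist_norm algebra_simps scaleR_2 norm_minus_commute)
  have "T p \<le> (1/2) *\<^sub>R T z + (1/2) *\<^sub>R T z'"
    using convex_half[OF cv, of z z'] by (simp add: z'_def algebra_simps)
  then have "2 *\<^sub>R T p \<le> 2 *\<^sub>R ((1/2) *\<^sub>R T z + (1/2) *\<^sub>R T z')"
    by (rule scaleR_left_mono) simp
  then have "2 *\<^sub>R T p - T z' \<le> T z"
    by (simp add: scaleR_add_right algebra_simps)
  then have "2 *\<^sub>R T p - U z' \<le> T z"
    using upper[of z'] by (meson diff_left_mono order_trans)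
  then have "norm (T z) \<le> norm (2 *\<^sub>R T p - U z') + norm (U z)"
    using upper[of z] by (rule banach_lattice_norm_between[OF bl])
  also have "\<dots> \<le> (2 * Cp + (C2 / 2 + m / 2)) + (C2 / 2 + m / 2)"
    using norm_triangle_ineq4[of "2 *\<^sub>R T p" "U z'"] U_bound[OF z] U_bound[OF z'] assms(4)
    by simp
  finally show ?thesis
    by simp
qed

lemma convex_uniform_boundedness:
  fixes T :: "'i \<Rightarrow> 'a::banach \<Rightarrow> 'b::{banach,ordered_real_vector,lattice}"
  assumes bl: "banach_lattice TYPE('b)"
    and cv: "\<And>i. i \<in> I \<Longrightarrow> convex_op (T i)"
    and cont: "\<And>i. i \<in> I \<Longrightarrow> continuous_on UNIV (T i)"
    and pointwise: "\<And>z. \<exists>C. \<forall>i\<in>I. norm (T i z) \<le> C"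
  shows "\<exists>\<rho> M. \<rho> > 0 \<and> (\<forall>i\<in>I. \<forall>z\<in>ball p \<rho>. norm (T i z) \<le> M)"
proof -
  obtain c r m where "r > 0" and on_ball: "\<forall>i\<in>I. \<forall>z\<in>ball c r. norm (T i z) \<le> m"
    using Baire_uniform_bound_on_ball[OF cont pointwise] by blast
  obtain Cp C2 where "\<forall>i\<in>I. norm (T i p) \<le> Cp" "\<forall>i\<in>I. norm (T i (2 *\<^sub>R p - c)) \<le> C2"
    using pointwise by meson
  then have "\<forall>i\<in>I. \<forall>z\<in>ball p (r / 2). norm (T i z) \<le> 2 * Cp + C2 + m"
    using on_ball by (intro ballI convex_op_bound_transfer[OF bl cv]) auto
  then show ?thesis
    using \<open>r > 0\<close> by (intro exI[of _ "r / 2"] exI[of _ "2 * Cp + C2 + m"]) simp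
qed

lemma filterlim_at_left_to_0:
  "filterlim f F (at_left (a::real)) \<longleftrightarrow> filterlim (\<lambda>h. f (a - h)) F (at_right 0)"
  unfolding filterlim_at_left_to_right at_right_to_0[of "- a"] filterlim_filtermap by simp

lemma eventually_at_right_0_bounded: "b > 0 \<Longrightarrow> \<forall>\<^sub>F h in at_right (0::real). 0 < h \<and> h < b"
  by (rule eventually_at_rightI[where b = b]) auto

lemma at_within_Ici_eq_at: "(s::real) > a \<Longrightarrow> at s within {a..} = at s"
  by (rule at_within_interior) simp

lemma tendsto_scaleR_at_right_0: "((\<lambda>h. h *\<^sub>R v) \<longlongrightarrow> 0) (at_right (0::real))"
  for v :: "'a::real_normed_vector"
proof -
  have "((\<lambda>h. h *\<^sub>R v) \<longlongrightarrow> 0 *\<^sub>R v) (at_right (0::real))"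
    by (intro tendsto_scaleR tendsto_ident_at tendsto_const)
  then show ?thesis
    by simp
qed

lemma has_vector_derivative_at_within_Ici:
  fixes f :: "real \<Rightarrow> 'a::real_normed_vector"
  assumes "s \<ge> 0"
    and right: "((\<lambda>h. (1 / h) *\<^sub>R (f (s + h) - f s)) \<longlongrightarrow> D) (at_right 0)"
    and left: "s > 0 \<Longrightarrow> ((\<lambda>h. (1 / h) *\<^sub>R (f s - f (s - h))) \<longlongrightarrow> D) (at_right 0)"
  shows "(f has_vector_derivative D) (at s within {0..})"
proof -
  define Q where "Q r = (1 / norm (r - s)) *\<^sub>R (f r - (f s + (r - s) *\<^sub>R D))" for r
  have "(Q \<longlongrightarrow> 0) (at_right s)"
    unfolding filterlim_at_right_to_0[of _ _ s]
  proof (rule Lim_transform_eventually)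
    show "((\<lambda>h. (1 / h) *\<^sub>R (f (s + h) - f s) - D) \<longlongrightarrow> 0) (at_right 0)"
      using LIM_zero[OF right] .
    show "\<forall>\<^sub>F h in at_right 0. (1 / h) *\<^sub>R (f (s + h) - f s) - D = Q (h + s)"
      using eventually_at_right_less by (rule eventually_mono) (simp add: Q_def algebra_simps)
  qed
  moreover have "(Q \<longlongrightarrow> 0) (at_left s)" if "s > 0"
    unfolding filterlim_at_left_to_0
  proof (rule Lim_transform_eventually)
    show "((\<lambda>h. D - (1 / h) *\<^sub>R (f s - f (s - h))) \<longlongrightarrow> 0) (at_right 0)"
      using tendsto_diff[OF tendsto_const left[OF that], of D] by simp
    show "\<forall>\<^sub>F h in at_right 0. D - (1 / h) *\<^sub>R (f s - f (s - h)) = Q (s - h)"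
      using eventually_at_right_less by (rule eventually_mono) (simp add: Q_def algebra_simps)
  qed
  ultimately have "(Q \<longlongrightarrow> 0) (at s within {0..})"
    using \<open>s \<ge> 0\<close>
    by (cases "s = 0") (simp_all add: at_within_Ici_at_right at_within_Ici_eq_at filterlim_at_split)
  then show ?thesis
    unfolding has_vector_derivative_def has_derivative_within Q_def
    by (simp add: bounded_linear_scaleR_left)
qed

section \<open>Convex \<open>C\<^sub>0\<close>-semigroups\<close>

lemma generator_tendsto:
  "x \<in> gen_domain S \<Longrightarrow> ((\<lambda>h. (1 / h) *\<^sub>R (S h x - x)) \<longlongrightarrow> generator S x) (at_right 0)"
  unfolding gen_domain_def generator_def by (auto intro: tendsto_Lim[THEN ssubst])

lemma generatorI:
  assumes "((\<lambda>h. (1 / h) *\<^sub>R (S h x - x)) \<longlongrightarrow> y) (at_right 0)"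
  shows "x \<in> gen_domain S" and "generator S x = y"
  using assms unfolding gen_domain_def generator_def by (auto intro: tendsto_Lim)

locale convex_semigroup =
  fixes S :: "real \<Rightarrow> 'a::{banach,ordered_real_vector,lattice} \<Rightarrow> 'a"
  assumes bl: "banach_lattice TYPE('a)" and oc: "order_continuous_norm TYPE('a)"
    and sg: "convex_C0_semigroup S"
begin

lemma convex_S: "t \<ge> 0 \<Longrightarrow> convex_op (S t)"
  using sg unfolding convex_C0_semigroup_def by blast

lemma bounded_S: "t \<ge> 0 \<Longrightarrow> bounded_op (S t)"
  using sg unfolding convex_C0_semigroup_def by blast

lemma S_0: "S 0 x = x"
  using sg unfolding convex_C0_semigroup_def by blast

lemma S_add: "s \<ge> 0 \<Longrightarrow> t \<ge> 0 \<Longrightarrow> S (t + s) x = S t (S s x)"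
  using sg unfolding convex_C0_semigroup_def by blast

lemma S_commute: "s \<ge> 0 \<Longrightarrow> t \<ge> 0 \<Longrightarrow> S s (S t x) = S t (S s x)"
  using S_add[of t s x] S_add[of s t x] by (simp add: add.commute)

lemma orbit_tendsto_at_right_0: "((\<lambda>t. S t x) \<longlongrightarrow> x) (at_right 0)"
  using sg unfolding convex_C0_semigroup_def by blast

lemma continuous_on_S: "t \<ge> 0 \<Longrightarrow> continuous_on UNIV (S t)"
  by (rule convex_bounded_op_continuous[OF bl convex_S bounded_S])

lemma isCont_S: "t \<ge> 0 \<Longrightarrow> isCont (S t) x"
  using continuous_on_S by (simp add: continuous_on_eq_continuous_at)

lemma orbit_bounded_near_0: "\<exists>\<delta>>0. \<forall>s\<in>{0..\<delta>}. norm (S s z) \<le> norm z + 1"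
proof -
  obtain b where "b > 0" and b: "\<And>h. 0 < h \<Longrightarrow> h < b \<Longrightarrow> dist (S h z) z < 1"
    using tendstoD[OF orbit_tendsto_at_right_0 zero_less_one, of z] by (auto simp: eventually_at_right_field)
  have "norm (S s z) \<le> norm z + 1" if "s \<in> {0..b / 2}" for s
  proof (cases "s = 0")
    case False
    then have "dist (S s z) z < 1"
      using b that \<open>b > 0\<close> by simp
    then show ?thesis
      using norm_triangle_ineq2[of "S s z" z] by (simp add: dist_norm)
  qed (simp add: S_0)
  then show ?thesis
    using \<open>b > 0\<close> by (intro exI[of _ "b / 2"]) simp
qed

lemma orbit_bounded: "\<exists>C. \<forall>s\<in>{0..T}. norm (S s z) \<le> C"
proof -
  obtain \<delta> where "\<delta> > 0" and near_0: "\<forall>s\<in>{0..\<delta>}. norm (S s z) \<le> norm z + 1"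
    using orbit_bounded_near_0 by blast
  \<comment> \<open>on \<open>[\<delta>, (n + 1) \<delta>]\<close>, write \<open>S s z = S \<delta> (S (s - \<delta>) z)\<close> and use that \<open>S \<delta>\<close> maps bounded sets to bounded sets\<close>
  have "\<exists>C. \<forall>s\<in>{0..real n * \<delta>}. norm (S s z) \<le> C" for n :: nat
  proof (induction n)
    case 0
    then show ?case
      by (auto simp: S_0)
  next
    case (Suc n)
    then obtain C where C: "\<forall>s\<in>{0..real n * \<delta>}. norm (S s z) \<le> C"
      by blast
    obtain M where M: "\<forall>v. norm v \<le> \<bar>C\<bar> + 1 \<longrightarrow> norm (S \<delta> v) \<le> M"
      using bounded_S[of \<delta>] \<open>\<delta> > 0\<close> unfolding bounded_op_def by force
    have "norm (S s z) \<le> max (norm z + 1) M" if s: "s \<in> {0..real (Suc n) * \<delta>}" for s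
    proof (cases "s \<le> \<delta>")
      case False
      then have "S s z = S \<delta> (S (s - \<delta>) z)" and "s - \<delta> \<in> {0..real n * \<delta>}"
        using S_add[of "s - \<delta>" \<delta> z] s \<open>\<delta> > 0\<close> by (auto simp: algebra_simps)
      have "norm (S (s - \<delta>) z) \<le> \<bar>C\<bar> + 1"
        using bspec[OF C \<open>s - \<delta> \<in> {0..real n * \<delta>}\<close>] abs_ge_self[of C] by linarith
      then have "norm (S \<delta> (S (s - \<delta>) z)) \<le> M"
        using M by blast
      then show ?thesis
        using \<open>S s z = S \<delta> (S (s - \<delta>) z)\<close> by simp
    qed (use near_0 s in \<open>simp add: le_max_iff_disj\<close>)
    then show ?case
      by blast
  qed
  moreover obtain n :: nat where "T / \<delta> \<le> real n"
    using real_arch_simple by blast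
  then have "{0..T} \<subseteq> {0..real n * \<delta>}"
    using \<open>\<delta> > 0\<close> by (auto simp: field_simps)
  ultimately show ?thesis
    by blast
qed

lemma uniformly_bounded_near: "\<exists>\<rho> M. \<rho> > 0 \<and> (\<forall>s\<in>{0..T}. \<forall>z\<in>ball p \<rho>. norm (S s z) \<le> M)"
  by (rule convex_uniform_boundedness[OF bl convex_S continuous_on_S orbit_bounded]) auto

lemma uniformly_lipschitz_near: "\<exists>\<rho> L. \<rho> > 0 \<and> (\<forall>s\<in>{0..T}. L-lipschitz_on (cball p \<rho>) (S s))"
proof -
  obtain \<rho> M where "\<rho> > 0" and bound: "\<forall>s\<in>{0..T}. \<forall>z\<in>ball p \<rho>. norm (S s z) \<le> M"
    using uniformly_bounded_near by blast
  have "(4 * M / (\<rho> / 4))-lipschitz_on (cball p (\<rho> / 4)) (S s)" if "s \<in> {0..T}" for s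
    using \<open>\<rho> > 0\<close> bound that
    by (intro convex_op_lipschitz_on_cball[OF bl convex_S]) (auto simp: subset_eq)
  then show ?thesis
    using \<open>\<rho> > 0\<close> by (intro exI[of _ "\<rho> / 4"] exI[of _ "4 * M / (\<rho> / 4)"]) simp
qed

lemma orbit_tendsto_at_right:
  assumes "s \<ge> 0"
  shows "((\<lambda>r. S r z) \<longlongrightarrow> S s z) (at_right s)"
  unfolding filterlim_at_right_to_0[of _ _ s]
proof (rule Lim_transform_eventually)
  show "((\<lambda>h. S s (S h z)) \<longlongrightarrow> S s z) (at_right 0)"
    by (rule isCont_tendsto_compose[OF isCont_S[OF assms] orbit_tendsto_at_right_0])
  show "\<forall>\<^sub>F h in at_right 0. S s (S h z) = S (h + s) z"
    using eventually_at_right_less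
    by (rule eventually_mono) (use S_add[of _ s z] assms in \<open>simp add: add.commute\<close>)
qed

lemma orbit_tendsto_at_left:
  assumes "s > 0"
  shows "((\<lambda>r. S r z) \<longlongrightarrow> S s z) (at_left s)"
  unfolding filterlim_at_left_to_0
proof -
  obtain \<rho> L where "\<rho> > 0" and lip: "\<forall>r\<in>{0..s}. L-lipschitz_on (cball z \<rho>) (S r)"
    using uniformly_lipschitz_near by blast
  \<comment> \<open>\<open>S s z = S (s - h) (S h z)\<close>, and \<open>S (s - h)\<close> is Lipschitz near \<open>z\<close> uniformly in \<open>h\<close>\<close>
  have "\<forall>\<^sub>F h in at_right 0. norm (S (s - h) z - S s z) \<le> norm (S h z - z) * L"
    using tendstoD[OF orbit_tendsto_at_right_0 \<open>\<rho> > 0\<close>, of z] eventually_at_right_0_bounded[OF \<open>s > 0\<close>]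
  proof eventually_elim
    case (elim h)
    then have "S s z = S (s - h) (S h z)" and "s - h \<in> {0..s}" and "S h z \<in> cball z \<rho>"
      using S_add[of h "s - h" z] by (auto simp: dist_commute)
    then have "norm (S (s - h) z - S (s - h) (S h z)) \<le> L * norm (z - S h z)"
      using \<open>\<rho> > 0\<close> by (intro lipschitz_on_normD[OF bspec[OF lip]]) auto
    then show ?case
      using \<open>S s z = S (s - h) (S h z)\<close> by (simp add: mult.commute norm_minus_commute)
  qed
  then have "((\<lambda>h. S (s - h) z - S s z) \<longlongrightarrow> 0) (at_right 0)"
    by (rule tendsto_0_le[OF LIM_zero[OF orbit_tendsto_at_right_0], rotated])
  then show "((\<lambda>h. S (s - h) z) \<longlongrightarrow> S s z) (at_right 0)"
    by (rule LIM_zero_cancel)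
qed

lemma orbit_continuous_on: "continuous_on {0..} (\<lambda>s. S s z)"
  unfolding continuous_on_def
proof (intro ballI)
  fix s :: real assume "s \<in> {0..}"
  show "((\<lambda>r. S r z) \<longlongrightarrow> S s z) (at s within {0..})"
  proof (cases "s = 0")
    case True
    then show ?thesis
      using orbit_tendsto_at_right_0 by (simp add: at_within_Ici_at_right S_0)
  next
    case False
    with \<open>s \<in> {0..}\<close> have "s > 0"
      by simp
    then show ?thesis
      by (simp add: at_within_Ici_eq_at filterlim_at_split orbit_tendsto_at_left orbit_tendsto_at_right)
  qed
qed


lemma dir_deriv_plus_tendsto:
  "t \<ge> 0 \<Longrightarrow> (diff_quot (S t) x y \<longlongrightarrow> dir_deriv_plus S t x y) (at_right 0)"
  by (rule convex_dir_deriv_plus(1)[where S = S, OF bl oc convex_S])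

lemma dir_deriv_plus_le: "t \<ge> 0 \<Longrightarrow> h > 0 \<Longrightarrow> dir_deriv_plus S t x y \<le> diff_quot (S t) x y h"
  by (rule convex_dir_deriv_plus(2)[where S = S, OF bl oc convex_S])

lemma dir_deriv_minus_tendsto:
  "t \<ge> 0 \<Longrightarrow> ((\<lambda>h. diff_quot (S t) x y (- h)) \<longlongrightarrow> dir_deriv_minus S t x y) (at_right 0)"
  by (rule convex_dir_deriv_minus(1)[where S = S, OF bl oc convex_S])

lemma dir_deriv_minus_ge: "t \<ge> 0 \<Longrightarrow> h > 0 \<Longrightarrow> diff_quot (S t) x y (- h) \<le> dir_deriv_minus S t x y"
  by (rule convex_dir_deriv_minus(2)[where S = S, OF bl oc convex_S])

lemma small_time_diff_quot_tendsto: "((\<lambda>h. diff_quot (S h) z w (- h)) \<longlongrightarrow> w) (at_right 0)"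
proof (rule banach_lattice_tendsto_sandwich[OF bl])
  \<comment> \<open>by convexity of \<open>S h\<close>, \<open>diff_quot (S h) z w (- h)\<close> lies between the quotients at \<open>-1\<close> and \<open>1\<close>\<close>
  show "\<forall>\<^sub>F h in at_right 0. S h z - S h (z - w) \<le> diff_quot (S h) z w (- h)
      \<and> diff_quot (S h) z w (- h) \<le> S h (z + w) - S h z"
    using eventually_at_right_0_bounded[OF zero_less_one]
  proof eventually_elim
    case (elim h)
    then have "diff_quot (S h) z w (- 1) \<le> diff_quot (S h) z w (- h)"
      and "diff_quot (S h) z w (- h) \<le> diff_quot (S h) z w 1"
      by (auto intro!: convex_diff_quot_mono[OF convex_S])
    then show ?case
      by (simp add: diff_quot_def)
  qed
  show "((\<lambda>h. S h z - S h (z - w)) \<longlongrightarrow> w) (at_right 0)"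
    using tendsto_diff[OF orbit_tendsto_at_right_0 orbit_tendsto_at_right_0, of z "z - w"] by simp
  show "((\<lambda>h. S h (z + w) - S h z) \<longlongrightarrow> w) (at_right 0)"
    using tendsto_diff[OF orbit_tendsto_at_right_0 orbit_tendsto_at_right_0, of "z + w" z] by simp
qed

lemma backward_step_quotient_vanishes:
  assumes "z \<in> gen_domain S"
  shows "((\<lambda>h. (1 / h) *\<^sub>R (S h (z - h *\<^sub>R generator S z) - z)) \<longlongrightarrow> 0) (at_right 0)"
proof -
  have "((\<lambda>h. (1 / h) *\<^sub>R (S h z - z) - diff_quot (S h) z (generator S z) (- h)) \<longlongrightarrow>
      generator S z - generator S z) (at_right 0)"
    by (intro tendsto_diff generator_tendsto[OF assms] small_time_diff_quot_tendsto)
  then show ?thesis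
    by (simp add: diff_quot_def algebra_simps)
qed

lemma S_diff_quotient_vanishes:
  assumes uv: "((\<lambda>h. (1 / h) *\<^sub>R (u h - v h)) \<longlongrightarrow> 0) (at_right 0)"
    and v: "(v \<longlongrightarrow> p) (at_right 0)"
    and \<sigma>: "\<forall>\<^sub>F h in at_right 0. \<sigma> h \<in> {0..T}"
  shows "((\<lambda>h. (1 / h) *\<^sub>R (S (\<sigma> h) (u h) - S (\<sigma> h) (v h))) \<longlongrightarrow> 0) (at_right 0)"
proof -
  obtain \<rho> L where "\<rho> > 0" and lip: "\<forall>s\<in>{0..T}. L-lipschitz_on (cball p \<rho>) (S s)"
    using uniformly_lipschitz_near by blast
  have "((\<lambda>h. v h + h *\<^sub>R ((1 / h) *\<^sub>R (u h - v h))) \<longlongrightarrow> p + 0 *\<^sub>R 0) (at_right 0)"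
    by (intro tendsto_add tendsto_scaleR v uv tendsto_ident_at)
  moreover have "\<forall>\<^sub>F h in at_right 0. v h + h *\<^sub>R ((1 / h) *\<^sub>R (u h - v h)) = u h"
    using eventually_at_right_less by (rule eventually_mono) simp
  ultimately have u: "(u \<longlongrightarrow> p) (at_right 0)"
    by (simp add: Lim_transform_eventually)
  have "\<forall>\<^sub>F h in at_right 0.
      norm ((1 / h) *\<^sub>R (S (\<sigma> h) (u h) - S (\<sigma> h) (v h))) \<le> norm ((1 / h) *\<^sub>R (u h - v h)) * L"
    using \<sigma> tendstoD[OF u \<open>\<rho> > 0\<close>] tendstoD[OF v \<open>\<rho> > 0\<close>] eventually_at_right_less
  proof eventually_elim
    case (elim h)
    then have "norm (S (\<sigma> h) (u h) - S (\<sigma> h) (v h)) \<le> L * norm (u h - v h)"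
      by (intro lipschitz_on_normD[OF bspec[OF lip]]) (auto simp: dist_commute)
    then show ?case
      using elim(4) by (simp add: divide_simps mult.commute)
  qed
  then show ?thesis
    by (rule tendsto_0_le[OF uv])
qed


lemma orbit_right_quotient_tendsto:
  assumes x: "x \<in> gen_domain S" and "t \<ge> 0"
  shows "((\<lambda>h. (1 / h) *\<^sub>R (S h (S t x) - S t x)) \<longlongrightarrow> dir_deriv_plus S t x (generator S x)) (at_right 0)"
proof -
  define y where "y = generator S x"
  have "((\<lambda>h. (1 / h) *\<^sub>R (S t (S h x) - S t (x + h *\<^sub>R y))) \<longlongrightarrow> 0) (at_right 0)"
  proof (rule S_diff_quotient_vanishes[where \<sigma> = "\<lambda>_. t" and T = t])
    have "((\<lambda>h. (1 / h) *\<^sub>R (S h x - x) - y) \<longlongrightarrow> 0) (at_right 0)"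
      using LIM_zero[OF generator_tendsto[OF x]] by (simp add: y_def)
    moreover have "\<forall>\<^sub>F h in at_right 0. (1 / h) *\<^sub>R (S h x - x) - y = (1 / h) *\<^sub>R (S h x - (x + h *\<^sub>R y))"
      using eventually_at_right_less by (rule eventually_mono) (simp add: algebra_simps)
    ultimately show "((\<lambda>h. (1 / h) *\<^sub>R (S h x - (x + h *\<^sub>R y))) \<longlongrightarrow> 0) (at_right 0)"
      by (rule Lim_transform_eventually)
    show "((\<lambda>h. x + h *\<^sub>R y) \<longlongrightarrow> x) (at_right 0)"
      using tendsto_add[OF tendsto_const tendsto_scaleR_at_right_0, of x y] by simp
  qed (use \<open>t \<ge> 0\<close> in simp)
  then have "((\<lambda>h. diff_quot (S t) x y h + (1 / h) *\<^sub>R (S t (S h x) - S t (x + h *\<^sub>R y)))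
      \<longlongrightarrow> dir_deriv_plus S t x y + 0) (at_right 0)"
    by (intro tendsto_add dir_deriv_plus_tendsto \<open>t \<ge> 0\<close>)
  moreover have "\<forall>\<^sub>F h in at_right 0. diff_quot (S t) x y h + (1 / h) *\<^sub>R (S t (S h x) - S t (x + h *\<^sub>R y))
      = (1 / h) *\<^sub>R (S h (S t x) - S t x)"
    using eventually_at_right_less
    by (rule eventually_mono) (simp add: diff_quot_def S_commute[OF _ \<open>t \<ge> 0\<close>] algebra_simps)
  ultimately show ?thesis
    unfolding y_def by (simp add: Lim_transform_eventually)
qed

lemma orbit_in_gen_domain: "x \<in> gen_domain S \<Longrightarrow> t \<ge> 0 \<Longrightarrow> S t x \<in> gen_domain S"
  by (rule generatorI(1)[where S = S and x = "S t x", OF orbit_right_quotient_tendsto])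

lemma generator_orbit_eq_dir_deriv_plus:
  "x \<in> gen_domain S \<Longrightarrow> t \<ge> 0 \<Longrightarrow> generator S (S t x) = dir_deriv_plus S t x (generator S x)"
  by (rule generatorI(2)[where S = S and x = "S t x", OF orbit_right_quotient_tendsto])

lemma generator_orbit_linear:
  assumes "x \<in> gen_domain S" and "t \<ge> 0" and "linear (S t)"
  shows "generator S (S t x) = S t (generator S x)"
proof -
  have "\<forall>\<^sub>F h in at_right 0. diff_quot (S t) x (generator S x) h = S t (generator S x)"
    using eventually_at_right_less
    by (rule eventually_mono) (simp add: diff_quot_def linear_add[OF assms(3)] linear_scale[OF assms(3)])
  then have "dir_deriv_plus S t x (generator S x) = S t (generator S x)"
    by (rule tendsto_unique[OF trivial_limit_at_right_real dir_deriv_plus_tendsto[OF assms(2)] tendsto_eventually])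
  then show ?thesis
    using generator_orbit_eq_dir_deriv_plus[OF assms(1,2)] by simp
qed

lemma orbit_left_quotient_tendsto:
  assumes x: "x \<in> gen_domain S" and "t > 0"
  shows "((\<lambda>h. (1 / h) *\<^sub>R (S t x - S (t - h) x)) \<longlongrightarrow> dir_deriv_minus S t x (generator S x)) (at_right 0)"
proof -
  define y where "y = generator S x"
  have "((\<lambda>h. (1 / h) *\<^sub>R (S (t - h) (S h (x - h *\<^sub>R y)) - S (t - h) x)) \<longlongrightarrow> 0) (at_right 0)"
    using eventually_at_right_0_bounded[OF \<open>t > 0\<close>]
    by (intro S_diff_quotient_vanishes[where T = t, OF backward_step_quotient_vanishes[OF x, folded y_def] tendsto_const])
      (auto elim: eventually_mono)
  then have "((\<lambda>h. diff_quot (S t) x y (- h) + (1 / h) *\<^sub>R (S (t - h) (S h (x - h *\<^sub>R y)) - S (t - h) x))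
      \<longlongrightarrow> dir_deriv_minus S t x y + 0) (at_right 0)"
    using \<open>t > 0\<close> by (intro tendsto_add dir_deriv_minus_tendsto) auto
  moreover have "\<forall>\<^sub>F h in at_right 0. diff_quot (S t) x y (- h) + (1 / h) *\<^sub>R (S (t - h) (S h (x - h *\<^sub>R y)) - S (t - h) x)
      = (1 / h) *\<^sub>R (S t x - S (t - h) x)"
    using eventually_at_right_0_bounded[OF \<open>t > 0\<close>]
  proof eventually_elim
    case (elim h)
    then have "S (t - h) (S h (x - h *\<^sub>R y)) = S t (x - h *\<^sub>R y)"
      using S_add[of h "t - h"] by simp
    then show ?case
      by (simp add: diff_quot_def algebra_simps)
  qed
  ultimately show ?thesis
    unfolding y_def by (simp add: Lim_transform_eventually)
qed

lemma dir_deriv_plus_eq_minus_orbit: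
  assumes x: "x \<in> gen_domain S" and "t \<ge> 0"
  shows "dir_deriv_plus S t x (generator S x) = dir_deriv_minus S t x (generator S x)"
proof -
  define y z w where "y = generator S x" and "z = S t x" and "w = dir_deriv_minus S t x y"
  \<comment> \<open>split \<open>S h z - z\<close> along \<open>S h (z - h w)\<close> and \<open>S h (S t (x - h y)) = S t (S h (x - h y))\<close>\<close>
  have E1: "((\<lambda>h. (1 / h) *\<^sub>R (S h (z - h *\<^sub>R w) - S h (S t (x - h *\<^sub>R y)))) \<longlongrightarrow> 0) (at_right 0)"
  proof (rule S_diff_quotient_vanishes[where \<sigma> = "\<lambda>h. h" and T = 1])
    have "((\<lambda>h. diff_quot (S t) x y (- h) - w) \<longlongrightarrow> 0) (at_right 0)"
      unfolding w_def by (intro LIM_zero dir_deriv_minus_tendsto \<open>t \<ge> 0\<close>)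
    moreover have "\<forall>\<^sub>F h in at_right 0.
        diff_quot (S t) x y (- h) - w = (1 / h) *\<^sub>R (z - h *\<^sub>R w - S t (x - h *\<^sub>R y))"
      using eventually_at_right_less by (rule eventually_mono) (simp add: diff_quot_def z_def algebra_simps)
    ultimately show "((\<lambda>h. (1 / h) *\<^sub>R (z - h *\<^sub>R w - S t (x - h *\<^sub>R y))) \<longlongrightarrow> 0) (at_right 0)"
      by (rule Lim_transform_eventually)
    have "((\<lambda>h. x - h *\<^sub>R y) \<longlongrightarrow> x) (at_right 0)"
      using tendsto_diff[OF tendsto_const tendsto_scaleR_at_right_0, of x y] by simp
    then show "((\<lambda>h. S t (x - h *\<^sub>R y)) \<longlongrightarrow> z) (at_right 0)"
      unfolding z_def by (rule isCont_tendsto_compose[OF isCont_S[OF \<open>t \<ge> 0\<close>]])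
    show "\<forall>\<^sub>F h in at_right 0. h \<in> {0..1::real}"
      using eventually_at_right_0_bounded[OF zero_less_one] by eventually_elim simp
  qed
  have E2: "((\<lambda>h. (1 / h) *\<^sub>R (S h (S t (x - h *\<^sub>R y)) - z)) \<longlongrightarrow> 0) (at_right 0)"
  proof (rule Lim_transform_eventually)
    show "((\<lambda>h. (1 / h) *\<^sub>R (S t (S h (x - h *\<^sub>R y)) - S t x)) \<longlongrightarrow> 0) (at_right 0)"
      by (rule S_diff_quotient_vanishes[where \<sigma> = "\<lambda>_. t" and T = t,
            OF backward_step_quotient_vanishes[OF x, folded y_def] tendsto_const]) (use \<open>t \<ge> 0\<close> in simp)
    show "\<forall>\<^sub>F h in at_right 0. (1 / h) *\<^sub>R (S t (S h (x - h *\<^sub>R y)) - S t x)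
        = (1 / h) *\<^sub>R (S h (S t (x - h *\<^sub>R y)) - z)"
      using eventually_at_right_less by (rule eventually_mono) (simp add: S_commute \<open>t \<ge> 0\<close> z_def)
  qed
  have "((\<lambda>h. diff_quot (S h) z w (- h) + (1 / h) *\<^sub>R (S h (z - h *\<^sub>R w) - S h (S t (x - h *\<^sub>R y)))
      + (1 / h) *\<^sub>R (S h (S t (x - h *\<^sub>R y)) - z)) \<longlongrightarrow> w + 0 + 0) (at_right 0)"
    by (intro tendsto_add E1 E2 small_time_diff_quot_tendsto)
  then have "((\<lambda>h. (1 / h) *\<^sub>R (S h z - z)) \<longlongrightarrow> w) (at_right 0)"
    by (simp add: diff_quot_def algebra_simps)
  then show ?thesis
    using orbit_right_quotient_tendsto[OF x \<open>t \<ge> 0\<close>] tendsto_unique[OF trivial_limit_at_right_real]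
    unfolding y_def z_def w_def by blast
qed

lemma generator_orbit_eq_dir_deriv_minus:
  "x \<in> gen_domain S \<Longrightarrow> t \<ge> 0 \<Longrightarrow> generator S (S t x) = dir_deriv_minus S t x (generator S x)"
  using generator_orbit_eq_dir_deriv_plus dir_deriv_plus_eq_minus_orbit by simp

lemma orbit_has_vector_derivative:
  assumes x: "x \<in> gen_domain S" and "s \<ge> 0"
  shows "((\<lambda>r. S r x) has_vector_derivative generator S (S s x)) (at s within {0..})"
proof (rule has_vector_derivative_at_within_Ici[OF \<open>s \<ge> 0\<close>])
  show "((\<lambda>h. (1 / h) *\<^sub>R (S (s + h) x - S s x)) \<longlongrightarrow> generator S (S s x)) (at_right 0)"
  proof (rule Lim_transform_eventually)
    show "((\<lambda>h. (1 / h) *\<^sub>R (S h (S s x) - S s x)) \<longlongrightarrow> generator S (S s x)) (at_right 0)"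
      by (rule generator_tendsto[OF orbit_in_gen_domain[OF x \<open>s \<ge> 0\<close>]])
    show "\<forall>\<^sub>F h in at_right 0. (1 / h) *\<^sub>R (S h (S s x) - S s x) = (1 / h) *\<^sub>R (S (s + h) x - S s x)"
      using eventually_at_right_less by (rule eventually_mono) (simp add: S_add \<open>s \<ge> 0\<close> add.commute)
  qed
  show "((\<lambda>h. (1 / h) *\<^sub>R (S s x - S (s - h) x)) \<longlongrightarrow> generator S (S s x)) (at_right 0)" if "s > 0"
    using orbit_left_quotient_tendsto[OF x that] generator_orbit_eq_dir_deriv_minus[OF x \<open>s \<ge> 0\<close>]
    by simp
qed

lemma generator_orbit_continuous:
  assumes x: "x \<in> gen_domain S"
  shows "continuous_on {0..} (\<lambda>s. generator S (S s x))"
  unfolding continuous_on_eq_continuous_within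
proof
  fix s0 :: real assume "s0 \<in> {0..}"
  define y where "y = generator S x"
  show "continuous (at s0 within {0..}) (\<lambda>s. generator S (S s x))"
  proof (rule banach_lattice_continuous_within_sandwich[OF bl,
        where lo = "\<lambda>k s. diff_quot (S s) x y (- k)" and hi = "\<lambda>k s. diff_quot (S s) x y k"])
    show "diff_quot (S s) x y (- k) \<le> generator S (S s x) \<and> generator S (S s x) \<le> diff_quot (S s) x y k"
      if "s \<in> {0..}" "k > 0" for s k
      using dir_deriv_minus_ge[of s k x y] dir_deriv_plus_le[of s k x y] that
        generator_orbit_eq_dir_deriv_minus[OF x, of s] generator_orbit_eq_dir_deriv_plus[OF x, of s]
      by (simp add: y_def)
    show "continuous (at s0 within {0..}) (\<lambda>s. diff_quot (S s) x y c)" for c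
      using orbit_continuous_on \<open>s0 \<in> {0..}\<close> unfolding diff_quot_def continuous_on_eq_continuous_within
      by (intro continuous_intros) auto
    then show "continuous (at s0 within {0..}) (\<lambda>s. diff_quot (S s) x y k)" for k .
    show "((\<lambda>k. diff_quot (S s0) x y (- k)) \<longlongrightarrow> generator S (S s0 x)) (at_right 0)"
      using dir_deriv_minus_tendsto generator_orbit_eq_dir_deriv_minus[OF x] \<open>s0 \<in> {0..}\<close>
      by (simp add: y_def)
    show "((\<lambda>k. diff_quot (S s0) x y k) \<longlongrightarrow> generator S (S s0 x)) (at_right 0)"
      using dir_deriv_plus_tendsto generator_orbit_eq_dir_deriv_plus[OF x] \<open>s0 \<in> {0..}\<close>
      by (simp add: y_def)
  qed
qed

lemma orbit_has_integral:
  assumes x: "x \<in> gen_domain S" and "t \<ge> 0"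
  shows "((\<lambda>s. generator S (S s x)) has_integral (S t x - x)) {0..t}"
    and "((\<lambda>s. dir_deriv_plus S s x (generator S x)) has_integral (S t x - x)) {0..t}"
    and "((\<lambda>s. dir_deriv_minus S s x (generator S x)) has_integral (S t x - x)) {0..t}"
proof -
  show integral: "((\<lambda>s. generator S (S s x)) has_integral (S t x - x)) {0..t}"
    using fundamental_theorem_of_calculus[OF \<open>t \<ge> 0\<close>, of "\<lambda>r. S r x"]
      has_vector_derivative_within_subset[OF orbit_has_vector_derivative[OF x]]
    by (auto simp: S_0)
  show "((\<lambda>s. dir_deriv_plus S s x (generator S x)) has_integral (S t x - x)) {0..t}"
    using integral by (rule has_integral_eq[rotated]) (simp add: generator_orbit_eq_dir_deriv_plus[OF x])
  show "((\<lambda>s. dir_deriv_minus S s x (generator S x)) has_integral (S t x - x)) {0..t}"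
    using integral by (rule has_integral_eq[rotated]) (simp add: generator_orbit_eq_dir_deriv_minus[OF x])
qed

end

theorem theorem3p3:
  fixes S :: "real \<Rightarrow> 'a::{banach, ordered_real_vector, lattice} \<Rightarrow> 'a"
    and x :: 'a and t :: real
  assumes "banach_lattice TYPE('a)"
    and "order_continuous_norm TYPE('a)"
    and "convex_C0_semigroup S"
    and "x \<in> gen_domain S"
    and "t \<ge> 0"
  shows
    \<comment> \<open>(i)\<close>
    "(S t x \<in> gen_domain S \<and>
      generator S (S t x) = dir_deriv_plus S t x (generator S x) \<and>
      (linear (S t) \<longrightarrow> generator S (S t x) = S t (generator S x)))
    \<comment> \<open>(ii)\<close>
    \<and> (t > 0 \<longrightarrow>
        ((\<lambda>h. (1 / h) *\<^sub>R (S t x - S (t - h) x)) \<longlongrightarrow> dir_deriv_minus S t x (generator S x))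
          (at_right 0))
    \<comment> \<open>(iii)\<close>
    \<and> dir_deriv_plus S t x (generator S x) = dir_deriv_minus S t x (generator S x)
    \<and> (\<forall>s\<ge>0. ((\<lambda>r. S r x) has_vector_derivative generator S (S s x)) (at s within {0..})
              \<and> generator S (S s x) = dir_deriv_plus S s x (generator S x)
              \<and> generator S (S s x) = dir_deriv_minus S s x (generator S x))
    \<and> continuous_on {0..} (\<lambda>s. generator S (S s x))
    \<comment> \<open>(iv)\<close>
    \<and> ((\<lambda>s. generator S (S s x)) has_integral (S t x - x)) {0..t}
    \<and> ((\<lambda>s. dir_deriv_plus S s x (generator S x)) has_integral (S t x - x)) {0..t}
    \<and> ((\<lambda>s. dir_deriv_minus S s x (generator S x)) has_integral (S t x - x)) {0..t}"
proof -
  interpret convex_semigroup S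
    using assms(1-3) by unfold_locales
  show ?thesis
    by (intro conjI allI impI orbit_in_gen_domain generator_orbit_eq_dir_deriv_plus generator_orbit_linear
        orbit_left_quotient_tendsto dir_deriv_plus_eq_minus_orbit orbit_has_vector_derivative
        generator_orbit_eq_dir_deriv_minus generator_orbit_continuous orbit_has_integral)
      (use assms(4,5) in auto)
qed

end
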